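(* Fix $N\ge1$ and let $\mathbf{F}$ be either $\mathbf{F}^{\rm Midpt}$ or $\mathbf{F}^{\rm Mass}$ (defined in the context). Given an initial condition $\mathbf{b}_0\in\mathbb{C}^N$, there exists $\Delta t_1>0$ such that for any fixed $\Delta t\le\Delta t_1$ the scheme $\mathbf{b}_{n+1}=\mathbf{b}_n+\Delta t\,\mathbf{F}(\mathbf{b}_n,\mathbf{b}_{n+1})$ can always be solved: for every $n\ge0$, the iterate $\mathbf{b}_{n+1}$ exists.
   Context: For $\mathbf{b}_n,\mathbf{b}_{n+1}\in\mathbb{C}^N$ with components $b_{j,n},b_{j,n+1}$, set $b_{0,m}=b_{N+1,m}=0$ for $m\in\{n,n+1\}$, and define $b_{j,n+1/2}=\tfrac12(b_{j,n}+b_{j,n+1})$, $|b|^2_{j,n+1/2}=\tfrac12(|b_{j,n}|^2+|b_{j,n+1}|^2)$. For $j=1,\dots,N$: $F^{\rm Midpt}_j=-i|b_{j,n+1/2}|^2b_{j,n+1/2}+2i\,\overline{b_{j,n+1/2}}(b_{j-1,n+1/2}^2+b_{j+1,n+1/2}^2)$ (implicit midpoint); $F^{\rm Mass}_j=-i|b|^2_{j,n+1/2}b_{j,n+1/2}+2i\,\overline{b_{j,n+1/2}}(b_{j+1,n+1/2}^2+b_{j-1,n+1/2}^2)$ (modified midpoint). Both are discretizations of the toy model system $-i\dot b_j=-|b_j|^2b_j+2b_{j-1}^2\bar b_j+2b_{j+1}^2\bar b_j$, $b_0=b_{N+1}=0$, and both exactly conserve the mass $\sum_j|b_{j,n}|^2$;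 they are the "mass preserving schemes". *)

theory Defs
  imports Complex_Main
begin

text \<open>A vector in C^N is represented as a function nat => complex whose
  components are b 1, ..., b N; components 0 and N+1 (and beyond) are zero,
  which encodes the boundary convention b_0 = b_{N+1} = 0.\<close>

definition vecN :: "nat \<Rightarrow> (nat \<Rightarrow> complex) \<Rightarrow> bool" where
  "vecN N b \<longleftrightarrow> (\<forall>j. (j = 0 \<or> N < j) \<longrightarrow> b j = 0)"

definition bmid :: "nat \<Rightarrow> (nat \<Rightarrow> complex) \<Rightarrow> (nat \<Rightarrow> complex) \<Rightarrow> nat \<Rightarrow> complex" where
  "bmid N x y j = (if 1 \<le> j \<and> j \<le> N then (x j + y j) / 2 else 0)"

definition absq_mid :: "(nat \<Rightarrow> complex) \<Rightarrow> (nat \<Rightarrow> complex) \<Rightarrow> nat \<Rightarrow> real" where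
  "absq_mid x y j = ((cmod (x j))\<^sup>2 + (cmod (y j))\<^sup>2) / 2"

definition F_midpt :: "nat \<Rightarrow> (nat \<Rightarrow> complex) \<Rightarrow> (nat \<Rightarrow> complex) \<Rightarrow> nat \<Rightarrow> complex" where
  "F_midpt N x y j =
     (let m = bmid N x y in
      - \<i> * complex_of_real ((cmod (m j))\<^sup>2) * m j
      + 2 * \<i> * cnj (m j) * ((m (j - 1))\<^sup>2 + (m (j + 1))\<^sup>2))"

definition F_mass :: "nat \<Rightarrow> (nat \<Rightarrow> complex) \<Rightarrow> (nat \<Rightarrow> complex) \<Rightarrow> nat \<Rightarrow> complex" where
  "F_mass N x y j =
     (let m = bmid N x y in
      - \<i> * complex_of_real (absq_mid x y j) * m j
      + 2 * \<i> * cnj (m j) * ((m (j + 1))\<^sup>2 + (m (j - 1))\<^sup>2))"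

definition scheme_step ::
  "(nat \<Rightarrow> (nat \<Rightarrow> complex) \<Rightarrow> (nat \<Rightarrow> complex) \<Rightarrow> nat \<Rightarrow> complex)
   \<Rightarrow> nat \<Rightarrow> real \<Rightarrow> (nat \<Rightarrow> complex) \<Rightarrow> (nat \<Rightarrow> complex) \<Rightarrow> bool" where
  "scheme_step F N dt x y \<longleftrightarrow>
     vecN N y \<and> (\<forall>j\<in>{1..N}. y j = x j + complex_of_real dt * F N x y j)"

end

theory Submission
  imports Defs
begin

text \<open>Both schemes conserve the mass \<Sum>j |b j|^2 exactly, so every iterate has all entries
  bounded by r = sqrt (mass b0). For x with entries bounded by r, the implicit step
  y = x + dt F(x, y) is a fixed point problem; on the vectors with entries bounded by R = r + 1
  the map u \<mapsto> x + dt F(x, u) maps this set into itself and halves l1 distances once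
  dt (5 R^3 + 30 N R^2) \<le> 1, so Picard iteration converges. Since the mass never changes,
  one such dt works for all steps.\<close>

lemma abs_norm_power2_diff_le:
  fixes a b :: "'a::real_normed_vector"
  assumes "norm a \<le> R" "norm b \<le> R" "norm (a - b) \<le> d"
  shows "\<bar>(norm a)\<^sup>2 - (norm b)\<^sup>2\<bar> \<le> 2 * R * d"
proof -
  have "(norm a)\<^sup>2 - (norm b)\<^sup>2 = (norm a - norm b) * (norm a + norm b)"
    by (simp add: power2_eq_square algebra_simps)
  then have "\<bar>(norm a)\<^sup>2 - (norm b)\<^sup>2\<bar> = \<bar>norm a - norm b\<bar> * (norm a + norm b)"
    by (simp add: abs_mult)
  also have "\<dots> \<le> d * (2 * R)"
    using norm_triangle_ineq3[of a b] assms by (intro mult_mono) auto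
  finally show ?thesis by (simp add: mult_ac)
qed

lemma norm_mult3_diff_le:
  fixes a1 a2 a3 b1 b2 b3 :: "'a::real_normed_div_algebra"
  assumes "norm a2 \<le> R" "norm a3 \<le> R" "norm b1 \<le> R" "norm b2 \<le> R"
  shows "norm (a1 * a2 * a3 - b1 * b2 * b3) \<le> R\<^sup>2 * (norm (a1 - b1) + norm (a2 - b2) + norm (a3 - b3))"
proof -
  have R: "0 \<le> R" using assms(1) norm_ge_zero order_trans by blast
  have "a1 * a2 * a3 - b1 * b2 * b3 = (a1 - b1) * a2 * a3 + b1 * (a2 - b2) * a3 + b1 * b2 * (a3 - b3)"
    by (simp add: algebra_simps)
  then have "norm (a1 * a2 * a3 - b1 * b2 * b3)
      \<le> norm ((a1 - b1) * a2 * a3) + norm (b1 * (a2 - b2) * a3) + norm (b1 * b2 * (a3 - b3))"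
    by (simp add: norm_triangle_le add_mono norm_triangle_ineq)
  also have "\<dots> \<le> norm (a1 - b1) * R * R + R * norm (a2 - b2) * R + R * R * norm (a3 - b3)"
    unfolding norm_mult using assms R by (intro add_mono mult_mono) auto
  finally show ?thesis by (simp add: power2_eq_square algebra_simps)
qed

lemma contraction_fixed_point:
  fixes G :: "('i \<Rightarrow> 'a::banach) \<Rightarrow> 'i \<Rightarrow> 'a"
    and I :: "'i set"
  defines "D u v \<equiv> \<Sum>i\<in>I. norm (u i - v i)"
  assumes "finite I" and "z \<in> K" and maps: "\<And>u. u \<in> K \<Longrightarrow> G u \<in> K"
    and contr: "\<And>u v. u \<in> K \<Longrightarrow> v \<in> K \<Longrightarrow> D (G u) (G v) \<le> q * D u v"
    and q: "0 \<le> q" "q < 1"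
    and outside: "\<And>u i. i \<notin> I \<Longrightarrow> G u i = 0"
    and cont: "\<And>Y y i. (\<And>i. (\<lambda>k. Y k i) \<longlonglongrightarrow> y i) \<Longrightarrow> (\<lambda>k. G (Y k) i) \<longlonglongrightarrow> G y i"
  shows "\<exists>y. G y = y"
proof -
  define Y where "Y k = (G ^^ k) z" for k
  have Y_Suc: "Y (Suc k) = G (Y k)" for k by (simp add: Y_def)
  have Y_in: "Y k \<in> K" for k by (induction k) (use \<open>z \<in> K\<close> maps in \<open>auto simp: Y_def\<close>)
  define E where "E = D (Y 1) (Y 0)"
  have step_le: "D (Y (Suc k)) (Y k) \<le> E * q ^ k" for k
  proof (induction k)
    case (Suc k)
    have "D (Y (Suc (Suc k))) (Y (Suc k)) \<le> q * D (Y (Suc k)) (Y k)"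
      using contr[OF Y_in Y_in, of "Suc k" k] by (simp only: Y_Suc)
    also have "\<dots> \<le> q * (E * q ^ k)" using Suc q by (intro mult_left_mono)
    finally show ?case by (simp add: mult_ac)
  qed (simp add: E_def)
  have comp_le: "norm (Y (Suc k) i - Y k i) \<le> E * q ^ k" if k: "1 \<le> k" for k i
  proof (cases "i \<in> I")
    case True
    then have "norm (Y (Suc k) i - Y k i) \<le> D (Y (Suc k)) (Y k)"
      unfolding D_def by (intro member_le_sum) (use \<open>finite I\<close> in auto)
    then show ?thesis using step_le by (rule order_trans)
  next
    case False
    moreover obtain k' where "k = Suc k'" using k by (cases k) auto
    moreover have "0 \<le> D (Y (Suc k)) (Y k)" unfolding D_def by (simp add: sum_nonneg)
    ultimately show ?thesis using step_le[of k] by (simp add: Y_Suc outside)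
  qed
  have "summable (\<lambda>k. Y (Suc k) i - Y k i)" for i
    by (rule summable_comparison_test'[OF _ comp_le]) (use q in \<open>auto intro!: summable_mult summable_geometric\<close>)
  then have partial_lim: "(\<lambda>n. Y n i - Y 0 i) \<longlonglongrightarrow> (\<Sum>k. Y (Suc k) i - Y k i)" for i
    using summable_LIMSEQ[of "\<lambda>k. Y (Suc k) i - Y k i"] by (simp add: sum_lessThan_telescope[of "\<lambda>k. Y k i"])
  have Y_lim: "(\<lambda>k. Y k i) \<longlonglongrightarrow> Y 0 i + (\<Sum>k. Y (Suc k) i - Y k i)" for i
    using tendsto_add[OF tendsto_const[of "Y 0 i"] partial_lim[of i]] by simp
  define y where "y i = Y 0 i + (\<Sum>k. Y (Suc k) i - Y k i)" for i
  have "G y i = y i" for i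
  proof (rule LIMSEQ_unique)
    show "(\<lambda>k. G (Y k) i) \<longlonglongrightarrow> G y i" by (rule cont[OF Y_lim[folded y_def]])
    show "(\<lambda>k. G (Y k) i) \<longlonglongrightarrow> y i" using LIMSEQ_Suc[OF Y_lim[of i, folded y_def]] by (simp add: Y_Suc)
  qed
  then show ?thesis by blast
qed

definition entries_le :: "nat \<Rightarrow> real \<Rightarrow> (nat \<Rightarrow> complex) \<Rightarrow> bool" where
  "entries_le N R u \<longleftrightarrow> (\<forall>i\<in>{1..N}. cmod (u i) \<le> R)"

lemma entries_le_nonneg: "entries_le N R u \<Longrightarrow> j \<in> {1..N} \<Longrightarrow> 0 \<le> R"
  unfolding entries_le_def using norm_ge_zero order_trans by blast

lemma entries_le_sqrt_mass: "entries_le N (sqrt (\<Sum>j\<in>{1..N}. (cmod (u j))\<^sup>2)) u"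
  unfolding entries_le_def
proof
  fix i assume "i \<in> {1..N}"
  then have "(cmod (u i))\<^sup>2 \<le> (\<Sum>j\<in>{1..N}. (cmod (u j))\<^sup>2)" by (intro member_le_sum) auto
  then show "cmod (u i) \<le> sqrt (\<Sum>j\<in>{1..N}. (cmod (u j))\<^sup>2)" by (simp add: real_le_rsqrt)
qed

lemma norm_bmid_le:
  assumes "entries_le N R x" "entries_le N R u" "0 \<le> R"
  shows "cmod (bmid N x u i) \<le> R"
proof (cases "i \<in> {1..N}")
  case True
  have "cmod ((x i + u i) / 2) \<le> (cmod (x i) + cmod (u i)) / 2"
    by (simp add: norm_divide norm_triangle_ineq divide_right_mono)
  also have "\<dots> \<le> R"
  proof -
    have "cmod (x i) \<le> R" "cmod (u i) \<le> R" using assms(1,2) True by (auto simp: entries_le_def)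
    then show ?thesis by simp
  qed
  finally show ?thesis using True by (simp add: bmid_def)
qed (use assms in \<open>auto simp: bmid_def\<close>)

lemma norm_bmid_diff_le:
  assumes "\<forall>i\<in>{1..N}. cmod (u i - v i) \<le> d" "0 \<le> d"
  shows "cmod (bmid N x u i - bmid N x v i) \<le> d"
proof (cases "i \<in> {1..N}")
  case True
  then have "cmod (bmid N x u i - bmid N x v i) = cmod (u i - v i) / 2"
    by (simp add: bmid_def add_divide_distrib norm_divide flip: diff_divide_distrib)
  moreover have "cmod (u i - v i) \<le> d" using assms True by blast
  ultimately show ?thesis using assms(2) by linarith
qed (use assms in \<open>auto simp: bmid_def\<close>)

lemma bmid_tendsto:
  assumes "\<And>i. (\<lambda>k. Y k i) \<longlonglongrightarrow> y i"
  shows "(\<lambda>k. bmid N x (Y k) i) \<longlonglongrightarrow> bmid N x y i"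
  unfolding bmid_def using assms by (auto intro!: tendsto_intros)

definition F_scheme ::
  "(nat \<Rightarrow> (nat \<Rightarrow> complex) \<Rightarrow> (nat \<Rightarrow> complex) \<Rightarrow> nat \<Rightarrow> real)
   \<Rightarrow> nat \<Rightarrow> (nat \<Rightarrow> complex) \<Rightarrow> (nat \<Rightarrow> complex) \<Rightarrow> nat \<Rightarrow> complex" where
  "F_scheme c N x y j =
     (let m = bmid N x y in
      - \<i> * complex_of_real (c N x y j) * m j + 2 * \<i> * cnj (m j) * ((m (j - 1))\<^sup>2 + (m (j + 1))\<^sup>2))"

lemma F_midpt_eq_F_scheme: "F_midpt = F_scheme (\<lambda>N x y j. (cmod (bmid N x y j))\<^sup>2)"
  by (simp add: fun_eq_iff F_midpt_def F_scheme_def)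

lemma F_mass_eq_F_scheme: "F_mass = F_scheme (\<lambda>N x y j. absq_mid x y j)"
  by (simp add: fun_eq_iff F_mass_def F_scheme_def Let_def add.commute)

lemma norm_F_scheme_le:
  assumes m: "\<And>i. cmod (bmid N x u i) \<le> R" and c: "\<bar>c N x u j\<bar> \<le> R\<^sup>2"
  shows "cmod (F_scheme c N x u j) \<le> 5 * R ^ 3"
proof -
  let ?m = "bmid N x u"
  have R: "0 \<le> R" using m[of 0] norm_ge_zero order_trans by blast
  have "cmod ((?m (j - 1))\<^sup>2 + (?m (j + 1))\<^sup>2) \<le> (cmod (?m (j - 1)))\<^sup>2 + (cmod (?m (j + 1)))\<^sup>2"
    by (metis norm_power norm_triangle_ineq)
  also have "\<dots> \<le> R\<^sup>2 + R\<^sup>2" using m R by (intro add_mono power_mono) auto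
  finally have sq: "cmod ((?m (j - 1))\<^sup>2 + (?m (j + 1))\<^sup>2) \<le> 2 * R\<^sup>2" by simp
  have "cmod (F_scheme c N x u j)
      \<le> \<bar>c N x u j\<bar> * cmod (?m j) + 2 * cmod (?m j) * cmod ((?m (j - 1))\<^sup>2 + (?m (j + 1))\<^sup>2)"
    unfolding F_scheme_def Let_def by (rule order_trans[OF norm_triangle_ineq]) (simp add: norm_mult)
  also have "\<dots> \<le> R\<^sup>2 * R + 2 * R * (2 * R\<^sup>2)"
    using m c sq R by (intro add_mono mult_mono) auto
  finally show ?thesis by (simp add: power2_eq_square power3_eq_cube)
qed

lemma norm_F_scheme_diff_le:
  assumes mu: "\<And>i. cmod (bmid N x u i) \<le> R" and mv: "\<And>i. cmod (bmid N x v i) \<le> R"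
    and md: "\<And>i. cmod (bmid N x u i - bmid N x v i) \<le> d"
    and cu: "\<bar>c N x u j\<bar> \<le> R\<^sup>2" and cd: "\<bar>c N x u j - c N x v j\<bar> \<le> 2 * R * d"
  shows "cmod (F_scheme c N x u j - F_scheme c N x v j) \<le> 15 * R\<^sup>2 * d"
proof -
  let ?m = "bmid N x u" and ?m' = "bmid N x v"
  have R: "0 \<le> R" using mu[of 0] norm_ge_zero order_trans by blast
  have d: "0 \<le> d" using md[of 0] norm_ge_zero order_trans by blast
  have cnj_d: "cmod (cnj (?m j) - cnj (?m' j)) \<le> d" using md by (metis complex_cnj_diff complex_mod_cnj)
  define A where "A = complex_of_real (c N x u j) * ?m j - complex_of_real (c N x v j) * ?m' j"
  define B where "B i = cnj (?m j) * ?m i * ?m i - cnj (?m' j) * ?m' i * ?m' i" for i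
  have eq: "F_scheme c N x u j - F_scheme c N x v j = - \<i> * A + 2 * \<i> * B (j - 1) + 2 * \<i> * B (j + 1)"
    unfolding F_scheme_def Let_def A_def B_def power2_eq_square by algebra
  have "cmod (F_scheme c N x u j - F_scheme c N x v j) \<le> cmod A + 2 * cmod (B (j - 1)) + 2 * cmod (B (j + 1))"
  proof -
    have "cmod (- \<i> * A + 2 * \<i> * B (j - 1) + 2 * \<i> * B (j + 1))
        \<le> cmod (- \<i> * A) + cmod (2 * \<i> * B (j - 1)) + cmod (2 * \<i> * B (j + 1))"
      by (rule norm_triangle_le, rule add_mono[OF norm_triangle_ineq order_refl])
    then show ?thesis unfolding eq by (simp add: norm_mult)
  qed
  also have "\<dots> \<le> 3 * R\<^sup>2 * d + 2 * (3 * R\<^sup>2 * d) + 2 * (3 * R\<^sup>2 * d)"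
  proof -
    have A_eq: "A = complex_of_real (c N x u j) * (?m j - ?m' j) + complex_of_real (c N x u j - c N x v j) * ?m' j"
      by (simp add: A_def algebra_simps)
    have "cmod A \<le> \<bar>c N x u j\<bar> * cmod (?m j - ?m' j) + \<bar>c N x u j - c N x v j\<bar> * cmod (?m' j)"
      unfolding A_eq by (rule order_trans[OF norm_triangle_ineq]) (simp only: norm_mult norm_of_real order_refl)
    also have "\<dots> \<le> R\<^sup>2 * d + (2 * R * d) * R" using mu mv md cu cd R d by (intro add_mono mult_mono) auto
    finally have "cmod A \<le> 3 * R\<^sup>2 * d" by (simp add: power2_eq_square algebra_simps)
    moreover have "cmod (B i) \<le> 3 * R\<^sup>2 * d" for i
    proof -
      have "cmod (B i) \<le> R\<^sup>2 * (cmod (cnj (?m j) - cnj (?m' j)) + cmod (?m i - ?m' i) + cmod (?m i - ?m' i))"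
        unfolding B_def by (rule norm_mult3_diff_le) (use mu mv in auto)
      also have "\<dots> \<le> R\<^sup>2 * (d + d + d)" using cnj_d md by (intro mult_left_mono add_mono) auto
      finally show ?thesis by simp
    qed
    ultimately show ?thesis by (intro add_mono mult_left_mono) auto
  qed
  finally show ?thesis by (simp add: mult_ac)
qed

lemma F_scheme_tendsto:
  assumes "\<And>i. (\<lambda>k. Y k i) \<longlonglongrightarrow> y i" "(\<lambda>k. c N x (Y k) j) \<longlonglongrightarrow> c N x y j"
  shows "(\<lambda>k. F_scheme c N x (Y k) j) \<longlonglongrightarrow> F_scheme c N x y j"
  unfolding F_scheme_def Let_def by (intro tendsto_intros bmid_tendsto assms)

lemma Re_F_scheme_mult_cnj:
  "Re ((- \<i> * complex_of_real a * m + 2 * \<i> * cnj m * (p\<^sup>2 + q\<^sup>2)) * cnj m)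
     = 2 * Im (cnj p ^ 2 * m\<^sup>2) - 2 * Im (cnj m ^ 2 * q\<^sup>2)"
  by (simp add: algebra_simps power2_eq_square)

text \<open>A step changes the mass at site j by 4 dt (g (j - 1) - g j) with the discrete flux
  g j = Im (conj (m j)^2 m (j+1)^2); the sum telescopes and the boundary fluxes vanish.\<close>

lemma scheme_step_mass_eq:
  assumes step: "scheme_step (F_scheme c) N dt x y"
  shows "(\<Sum>j\<in>{1..N}. (cmod (y j))\<^sup>2) = (\<Sum>j\<in>{1..N}. (cmod (x j))\<^sup>2)"
proof -
  define m where "m = bmid N x y"
  define g where "g i = Im (cnj (m i) ^ 2 * (m (Suc i))\<^sup>2)" for i
  have site: "(cmod (y j))\<^sup>2 - (cmod (x j))\<^sup>2 = 4 * dt * (g (j - 1) - g j)" if j: "j \<in> {1..N}" for j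
  proof -
    have "y j - x j = complex_of_real dt * F_scheme c N x y j"
      using step j by (simp add: scheme_step_def)
    moreover have "y j + x j = 2 * m j" using j by (simp add: m_def bmid_def)
    moreover have "(cmod (y j))\<^sup>2 - (cmod (x j))\<^sup>2 = Re ((y j - x j) * cnj (y j + x j))"
      unfolding cmod_power2 by (simp add: algebra_simps power2_eq_square)
    ultimately have "(cmod (y j))\<^sup>2 - (cmod (x j))\<^sup>2 = 2 * dt * Re (F_scheme c N x y j * cnj (m j))"
      by (simp add: mult_ac)
    also have "Re (F_scheme c N x y j * cnj (m j)) = 2 * g (j - 1) - 2 * g j"
      using j unfolding F_scheme_def Let_def m_def[symmetric] Re_F_scheme_mult_cnj g_def by simp
    finally show ?thesis by simp
  qed
  have "(\<Sum>j\<in>{1..N}. (cmod (y j))\<^sup>2 - (cmod (x j))\<^sup>2) = (\<Sum>i<N. 4 * dt * (g i - g (Suc i)))"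
    by (simp add: site sum.atLeast1_atMost_eq)
  also have "\<dots> = 4 * dt * (g 0 - g N)"
    by (simp add: sum_distrib_left[symmetric] sum_lessThan_telescope')
  also have "\<dots> = 0" by (simp add: g_def m_def bmid_def)
  finally show ?thesis by (simp add: sum_subtractf)
qed

definition admissible_coeff ::
  "(nat \<Rightarrow> (nat \<Rightarrow> complex) \<Rightarrow> (nat \<Rightarrow> complex) \<Rightarrow> nat \<Rightarrow> real) \<Rightarrow> bool" where
  "admissible_coeff c \<longleftrightarrow>
     (\<forall>N R x u j. j \<in> {1..N} \<and> entries_le N R x \<and> entries_le N R u \<longrightarrow> \<bar>c N x u j\<bar> \<le> R\<^sup>2) \<and>
     (\<forall>N R x u v d j. j \<in> {1..N} \<and> entries_le N R x \<and> entries_le N R u \<and> entries_le N R v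
        \<and> (\<forall>i\<in>{1..N}. cmod (u i - v i) \<le> d) \<longrightarrow> \<bar>c N x u j - c N x v j\<bar> \<le> 2 * R * d) \<and>
     (\<forall>N x Y y j. (\<forall>i. (\<lambda>k. Y k i) \<longlonglongrightarrow> y i) \<longrightarrow> (\<lambda>k. c N x (Y k) j) \<longlonglongrightarrow> c N x y j)"

lemma admissible_coeff_midpt: "admissible_coeff (\<lambda>N x y j. (cmod (bmid N x y j))\<^sup>2)"
  unfolding admissible_coeff_def
proof (intro conjI allI impI)
  fix N R x u v d j
  assume H: "j \<in> {1..N} \<and> entries_le N R x \<and> entries_le N R u \<and> entries_le N R v
    \<and> (\<forall>i\<in>{1..N}. cmod (u i - v i) \<le> d)"
  then have "0 \<le> R" "0 \<le> d"
    using entries_le_nonneg order_trans[OF norm_ge_zero, of "u j - v j" d] by auto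
  with H show "\<bar>(cmod (bmid N x u j))\<^sup>2 - (cmod (bmid N x v j))\<^sup>2\<bar> \<le> 2 * R * d"
    by (intro abs_norm_power2_diff_le norm_bmid_le norm_bmid_diff_le) auto
next
  fix N R x u j
  assume H: "j \<in> {1..N} \<and> entries_le N R x \<and> entries_le N R u"
  then have "0 \<le> R" using entries_le_nonneg by blast
  with H show "\<bar>(cmod (bmid N x u j))\<^sup>2\<bar> \<le> R\<^sup>2" by (simp add: norm_bmid_le power_mono)
qed (auto intro!: tendsto_intros bmid_tendsto)

lemma admissible_coeff_mass: "admissible_coeff (\<lambda>N x y j. absq_mid x y j)"
  unfolding admissible_coeff_def
proof (intro conjI allI impI)
  fix N R x u v d j
  assume H: "j \<in> {1..N} \<and> entries_le N R x \<and> entries_le N R u \<and> entries_le N R v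
    \<and> (\<forall>i\<in>{1..N}. cmod (u i - v i) \<le> d)"
  then have "\<bar>(cmod (u j))\<^sup>2 - (cmod (v j))\<^sup>2\<bar> \<le> 2 * R * d"
    by (intro abs_norm_power2_diff_le) (auto simp: entries_le_def)
  then show "\<bar>absq_mid x u j - absq_mid x v j\<bar> \<le> 2 * R * d"
    by (simp add: absq_mid_def field_simps)
next
  fix N R x u j
  assume "j \<in> {1..N} \<and> entries_le N R x \<and> entries_le N R u"
  then have "(cmod (x j))\<^sup>2 \<le> R\<^sup>2" "(cmod (u j))\<^sup>2 \<le> R\<^sup>2"
    by (auto simp: entries_le_def intro: power_mono)
  then show "\<bar>absq_mid x u j\<bar> \<le> R\<^sup>2" by (simp add: absq_mid_def)
qed (auto simp: absq_mid_def intro!: tendsto_intros)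

lemma scheme_step_exists:
  assumes c: "admissible_coeff c" and x: "entries_le N r x" and r: "0 \<le> r"
    and dt: "0 < dt" "dt * (5 * (r + 1) ^ 3 + 30 * real N * (r + 1)\<^sup>2) \<le> 1"
  shows "\<exists>y. scheme_step (F_scheme c) N dt x y"
proof -
  define R where "R = r + 1"
  define K where "K = Collect (entries_le N R)"
  define G where "G u j = (if j \<in> {1..N} then x j + complex_of_real dt * F_scheme c N x u j else 0)" for u j
  define D where "D u v = (\<Sum>i\<in>{1..N}. cmod (u i - v i))" for u v :: "nat \<Rightarrow> complex"
  have R: "0 \<le> R" and xR: "entries_le N R x" using r x by (auto simp: R_def entries_le_def)
  have dt_bound: "dt * (5 * R ^ 3) \<le> 1" "dt * (30 * real N * R\<^sup>2) \<le> 1"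
  proof -
    have "dt * (5 * R ^ 3) \<le> dt * (5 * R ^ 3 + 30 * real N * R\<^sup>2)"
      "dt * (30 * real N * R\<^sup>2) \<le> dt * (5 * R ^ 3 + 30 * real N * R\<^sup>2)"
      using dt(1) R by (intro mult_left_mono; simp)+
    then show "dt * (5 * R ^ 3) \<le> 1" "dt * (30 * real N * R\<^sup>2) \<le> 1"
      using dt(2) unfolding R_def by linarith+
  qed
  have m_le: "cmod (bmid N x u i) \<le> R" if "u \<in> K" for u i
    using norm_bmid_le[OF xR _ R] that by (simp add: K_def)
  have maps: "G u \<in> K" if u: "u \<in> K" for u
    unfolding K_def mem_Collect_eq entries_le_def
  proof
    fix i assume i: "i \<in> {1..N}"
    have "\<bar>c N x u i\<bar> \<le> R\<^sup>2" using c xR u i by (simp add: admissible_coeff_def K_def)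
    then have "dt * cmod (F_scheme c N x u i) \<le> dt * (5 * R ^ 3)"
      using dt(1) by (intro mult_left_mono norm_F_scheme_le[OF m_le[OF u]]) auto
    moreover have "cmod (G u i) \<le> cmod (x i) + dt * cmod (F_scheme c N x u i)"
      using i dt by (simp add: G_def order_trans[OF norm_triangle_ineq] norm_mult)
    moreover have "cmod (x i) \<le> r" using x i by (simp add: entries_le_def)
    ultimately show "cmod (G u i) \<le> R" using dt_bound(1) unfolding R_def by linarith
  qed
  have contr: "D (G u) (G v) \<le> 1 / 2 * D u v" if u: "u \<in> K" and v: "v \<in> K" for u v
  proof -
    have D_ge: "cmod (u i - v i) \<le> D u v" if "i \<in> {1..N}" for i
      unfolding D_def using that by (intro member_le_sum) auto
    have D_nonneg: "0 \<le> D u v" by (simp add: D_def sum_nonneg)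
    have md: "cmod (bmid N x u i - bmid N x v i) \<le> D u v" for i
      using norm_bmid_diff_le D_ge D_nonneg by blast
    have "cmod (G u i - G v i) \<le> dt * (15 * R\<^sup>2 * D u v)" if i: "i \<in> {1..N}" for i
    proof -
      have "\<bar>c N x u i\<bar> \<le> R\<^sup>2" "\<bar>c N x u i - c N x v i\<bar> \<le> 2 * R * D u v"
        using c xR u v i D_ge by (auto simp: admissible_coeff_def K_def)
      then have "cmod (F_scheme c N x u i - F_scheme c N x v i) \<le> 15 * R\<^sup>2 * D u v"
        using m_le u v md by (intro norm_F_scheme_diff_le)
      moreover have "G u i - G v i = complex_of_real dt * (F_scheme c N x u i - F_scheme c N x v i)"
        using i by (simp add: G_def algebra_simps)
      ultimately show ?thesis using dt(1) by (simp add: norm_mult mult_left_mono)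
    qed
    then have "D (G u) (G v) \<le> (\<Sum>i\<in>{1..N}. dt * (15 * R\<^sup>2 * D u v))"
      unfolding D_def by (intro sum_mono)
    also have "\<dots> = dt * (30 * real N * R\<^sup>2) * D u v / 2" by simp
    also have "\<dots> \<le> D u v / 2"
      using mult_right_mono[OF dt_bound(2) D_nonneg] by (simp add: mult_ac)
    finally show ?thesis by simp
  qed
  have "\<exists>y. G y = y"
  proof (rule contraction_fixed_point[where I="{1..N}" and K=K and z="\<lambda>_. 0" and q="1 / 2"])
    show "(\<lambda>_. 0) \<in> K" using R by (simp add: K_def entries_le_def)
    show "\<And>u v. u \<in> K \<Longrightarrow> v \<in> K \<Longrightarrow>
        (\<Sum>i\<in>{1..N}. cmod (G u i - G v i)) \<le> 1 / 2 * (\<Sum>i\<in>{1..N}. cmod (u i - v i))"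
      using contr unfolding D_def by blast
    show "\<And>Y y i. (\<And>i. (\<lambda>k. Y k i) \<longlonglongrightarrow> y i) \<Longrightarrow> (\<lambda>k. G (Y k) i) \<longlonglongrightarrow> G y i"
      using c unfolding G_def admissible_coeff_def by (auto intro!: tendsto_intros F_scheme_tendsto)
  qed (use maps in \<open>auto simp: G_def\<close>)
  then obtain y where fixed: "G y = y" by blast
  have y_eq: "y j = (if j \<in> {1..N} then x j + complex_of_real dt * F_scheme c N x y j else 0)" for j
    using fun_cong[OF fixed, of j] unfolding G_def by (rule sym)
  have "scheme_step (F_scheme c) N dt x y"
    unfolding scheme_step_def vecN_def by (intro conjI allI impI ballI; subst y_eq) auto
  then show ?thesis by blast
qed

lemma scheme_always_solvable:
  assumes c: "admissible_coeff c"
  shows "\<exists>dt1>0. \<forall>dt. 0 < dt \<and> dt \<le> dt1 \<longrightarrow>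
           (\<forall>n (b :: nat \<Rightarrow> nat \<Rightarrow> complex).
              b 0 = b0 \<and> (\<forall>k<n. scheme_step (F_scheme c) N dt (b k) (b (Suc k)))
              \<longrightarrow> (\<exists>y. scheme_step (F_scheme c) N dt (b n) y))"
proof -
  define mass where "mass u = (\<Sum>j\<in>{1..N}. (cmod (u j))\<^sup>2)" for u :: "nat \<Rightarrow> complex"
  define r where "r = sqrt (mass b0)"
  define S where "S = 5 * (r + 1) ^ 3 + 30 * real N * (r + 1)\<^sup>2"
  have r: "0 \<le> r" by (simp add: r_def mass_def sum_nonneg)
  then have S: "0 < S" by (simp add: S_def add_pos_nonneg)
  show ?thesis
  proof (intro exI[of _ "1 / S"] conjI allI impI)
    fix dt n and b :: "nat \<Rightarrow> nat \<Rightarrow> complex"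
    assume dt: "0 < dt \<and> dt \<le> 1 / S"
      and b: "b 0 = b0 \<and> (\<forall>k<n. scheme_step (F_scheme c) N dt (b k) (b (Suc k)))"
    have "mass (b k) = mass b0" if "k \<le> n" for k
      using that
    proof (induction k)
      case (Suc k)
      then have "scheme_step (F_scheme c) N dt (b k) (b (Suc k))" using b by simp
      then show ?case using scheme_step_mass_eq Suc by (simp add: mass_def)
    qed (simp add: b)
    then have "entries_le N r (b n)" using entries_le_sqrt_mass[of N "b n"] by (simp add: r_def mass_def)
    moreover have "dt * S \<le> 1" using dt S by (simp add: field_simps)
    ultimately show "\<exists>y. scheme_step (F_scheme c) N dt (b n) y"
      using scheme_step_exists[OF c _ r] dt by (simp add: S_def)
  qed (use S in simp)
qed

theorem corollary3p2:
  fixes N :: nat and b0 :: "nat \<Rightarrow> complex"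
    and F :: "nat \<Rightarrow> (nat \<Rightarrow> complex) \<Rightarrow> (nat \<Rightarrow> complex) \<Rightarrow> nat \<Rightarrow> complex"
  assumes "1 \<le> N"
    and "vecN N b0"
    and "F = F_midpt \<or> F = F_mass"
  shows "\<exists>dt1>0. \<forall>dt. 0 < dt \<and> dt \<le> dt1 \<longrightarrow>
           (\<forall>n (b :: nat \<Rightarrow> nat \<Rightarrow> complex).
              b 0 = b0 \<and> (\<forall>k<n. scheme_step F N dt (b k) (b (Suc k)))
              \<longrightarrow> (\<exists>y. scheme_step F N dt (b n) y))"
  using assms(3)
proof
  assume "F = F_midpt"
  then show ?thesis
    unfolding F_midpt_eq_F_scheme by (rule ssubst) (rule scheme_always_solvable[OF admissible_coeff_midpt])
next
  assume "F = F_mass"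
  then show ?thesis
    unfolding F_mass_eq_F_scheme by (rule ssubst) (rule scheme_always_solvable[OF admissible_coeff_mass])
qed

end
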